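(* Fix a wavelength $\lambda>0$, a numerical aperture $NA>0$ and a constant $A>0$. Let $P(\mathbf f)=1$ if $|\mathbf f|<NA/\lambda$ and $P(\mathbf f)=0$ otherwise ($\mathbf f=(f_x,f_y)\in\mathbb R^2$). Let $q_n\ge 0$ be an illumination intensity supported in the half-disk $\{\boldsymbol\rho=(\rho\cos\theta,\rho\sin\theta): 0\le\rho<NA/\lambda,\ \theta\in[\theta_0-\pi/2,\theta_0+\pi/2]\}$ with $\theta_0=0$. Define the phase transfer function $$\widetilde H_n(\mathbf f)=iA\iint q_n(\boldsymbol\rho)P^*(\boldsymbol\rho)\big[P(\boldsymbol\rho+\mathbf f)-P(\boldsymbol\rho-\mathbf f)\big]\,d^2\boldsymbol\rho ,$$ and the point spread function $H_n=\mathcal F^{-1}\widetilde H_n$. Let $u(x,y)=\operatorname{sign}(x)$ and let $g=H_n\otimes u$ be the filter response (2D convolution). Then the response magnitude is maximal along the $y$-axis: $|g(x,y)|\le |g(0,y)|$ for all $(x,y)\in\mathbb R^2$. In this sense $H_n$ is an edge detection filter for edges drawn along the $y$-axis.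
   Context: $\mathcal F^{-1}$ denotes the inverse 2D Fourier transform and $\otimes$ 2D convolution. The Fourier transform of $u$ is $\widetilde u(f_x,f_y)=\frac{1}{i f_x}$ concentrated on the line $f_y=0$ (i.e. $\frac{1}{if_x}\delta(f_y)$). $P$ is the aberration-free pupil of the objective lens; $q_n$ is the intensity of the incident oblique plane-wave illumination, and $\theta_0$ is the central illumination direction. *)

theory Defs
  imports "HOL-Analysis.Analysis"
begin

text \<open>Aberration-free pupil: P(f) = 1 if |f| < NA/lambda, 0 otherwise (real-valued, so P^* = P).\<close>
definition pupil :: "real \<Rightarrow> real \<Rightarrow> real \<times> real \<Rightarrow> real" where
  "pupil NA lam f = (if norm f < NA / lam then 1 else 0)"

definition half_disk :: "real \<Rightarrow> real \<Rightarrow> (real \<times> real) set" where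
  "half_disk NA lam = {(r * cos th, r * sin th) | r th.
      0 \<le> r \<and> r < NA / lam \<and> - pi / 2 \<le> th \<and> th \<le> pi / 2}"

definition ptf :: "real \<Rightarrow> real \<Rightarrow> real \<Rightarrow> (real \<times> real \<Rightarrow> real) \<Rightarrow> real \<times> real \<Rightarrow> complex" where
  "ptf A NA lam q f = \<i> * complex_of_real A *
     complex_of_real (\<integral>\<rho>. q \<rho> * pupil NA lam \<rho> *
        (pupil NA lam (\<rho> + f) - pupil NA lam (\<rho> - f)) \<partial>lborel)"

text \<open>Filter response g = H_n \<otimes> u with u(x,y) = sign x, computed as
  g = F^{-1}(H_n~ * u~) with u~(f_x,f_y) = 1/(i f_x) \<delta>(f_y) and inverse Fourier kernel
  exp(2 pi i (f_x x + f_y y)); integrating out the delta in f_y gives the formula below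
  (the result does not depend on y).\<close>
definition edge_response ::
  "real \<Rightarrow> real \<Rightarrow> real \<Rightarrow> (real \<times> real \<Rightarrow> real) \<Rightarrow> real \<Rightarrow> real \<Rightarrow> complex" where
  "edge_response A NA lam q x y =
     (\<integral>fx. ptf A NA lam q (fx, 0) * (1 / (\<i> * complex_of_real fx))
            * exp (2 * pi * \<i> * complex_of_real (fx * x + 0 * y)) \<partial>lborel)"

end

theory Submission
  imports Defs
begin

text \<open>On the frequency axis f_y = 0 the spectrum of the response is the real function
  A T(f_x) / f_x, where T(f_x) is the integral in the phase transfer function. Illumination
  from the half-disk has \<rho>_x \<ge> 0, so shifting \<rho> by (f_x, 0) moves it away from the
  origin at least as far as shifting by (-f_x, 0) does when f_x \<ge> 0, and vice versa; hence
  the pupil difference, and with it T(f_x) / f_x, never has the sign of f_x. A real spectrum of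
  constant sign has a Fourier transform whose modulus is largest at x = 0, by the triangle
  inequality for integrals.\<close>

definition edge_spectrum :: "real \<Rightarrow> real \<Rightarrow> real \<Rightarrow> (real \<times> real \<Rightarrow> real) \<Rightarrow> real \<Rightarrow> real" where
  "edge_spectrum A NA lam q fx = A * (\<integral>\<rho>. q \<rho> * pupil NA lam \<rho> *
     (pupil NA lam (\<rho> + (fx, 0)) - pupil NA lam (\<rho> - (fx, 0))) \<partial>lborel) / fx"

lemma integral_abs_eq_abs_integral_const_sign:
  fixes h :: "'a \<Rightarrow> real"
  assumes "(\<forall>t. 0 \<le> h t) \<or> (\<forall>t. h t \<le> 0)"
  shows "(\<integral>t. \<bar>h t\<bar> \<partial>M) = \<bar>\<integral>t. h t \<partial>M\<bar>"
  using assms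
proof
  assume "\<forall>t. 0 \<le> h t"
  then show ?thesis by (simp add: integral_nonneg_AE)
next
  assume nonpos: "\<forall>t. h t \<le> 0"
  have "(\<integral>t. \<bar>h t\<bar> \<partial>M) = - (\<integral>t. h t \<partial>M)"
    using nonpos by (simp add: abs_of_nonpos)
  moreover have "0 \<le> (\<integral>t. - h t \<partial>M)"
    by (rule integral_nonneg_AE) (simp add: nonpos)
  ultimately show ?thesis by simp
qed

lemma norm_integral_unimodular_le:
  fixes h :: "'a \<Rightarrow> real" and u :: "'a \<Rightarrow> complex"
  assumes "(\<forall>t. 0 \<le> h t) \<or> (\<forall>t. h t \<le> 0)" and "\<And>t. cmod (u t) = 1"
  shows "cmod (\<integral>t. of_real (h t) * u t \<partial>M) \<le> cmod (\<integral>t. of_real (h t) \<partial>M)"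
proof -
  have "cmod (\<integral>t. of_real (h t) * u t \<partial>M) \<le> (\<integral>t. cmod (of_real (h t) * u t) \<partial>M)"
    by (rule integral_norm_bound)
  also have "\<dots> = (\<integral>t. \<bar>h t\<bar> \<partial>M)"
    by (simp add: norm_mult assms(2))
  also have "\<dots> = cmod (\<integral>t. of_real (h t) \<partial>M)"
    using integral_abs_eq_abs_integral_const_sign[OF assms(1)] by simp
  finally show ?thesis .
qed

lemma norm_diff_le_norm_add:
  fixes x y :: "'a :: real_inner"
  assumes "0 \<le> inner x y"
  shows "norm (x - y) \<le> norm (x + y)"
  using assms by (simp add: norm_le algebra_simps inner_commute)

lemma pupil_antimono:
  "norm x \<le> norm y \<Longrightarrow> pupil NA lam y \<le> pupil NA lam x"
  by (simp add: pupil_def)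

lemma half_disk_fst_nonneg: "\<rho> \<in> half_disk NA lam \<Longrightarrow> 0 \<le> fst \<rho>"
  unfolding half_disk_def by (auto intro!: mult_nonneg_nonneg cos_ge_zero)

lemma pupil_shift_diff_mult_nonpos:
  assumes "0 \<le> fst \<rho>"
  shows "(pupil NA lam (\<rho> + (t, 0)) - pupil NA lam (\<rho> - (t, 0))) * t \<le> 0"
proof (cases "0 \<le> t")
  case True
  with assms have "0 \<le> inner \<rho> (t, 0)" by (cases \<rho>) simp
  then have "pupil NA lam (\<rho> + (t, 0)) \<le> pupil NA lam (\<rho> - (t, 0))"
    by (intro pupil_antimono norm_diff_le_norm_add)
  with True show ?thesis by (simp add: mult_nonpos_nonneg)
next
  case False
  with assms have "0 \<le> inner \<rho> (- (t, 0))" by (cases \<rho>) (simp add: mult_nonneg_nonpos)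
  then have "norm (\<rho> - - (t, 0)) \<le> norm (\<rho> + - (t, 0))"
    by (rule norm_diff_le_norm_add)
  then have "pupil NA lam (\<rho> - (t, 0)) \<le> pupil NA lam (\<rho> + (t, 0))"
    unfolding diff_minus_eq_add add_uminus_conv_diff by (rule pupil_antimono)
  with False show ?thesis by (simp add: mult_nonneg_nonpos)
qed

lemma edge_spectrum_nonpos:
  assumes "0 \<le> A" and "\<And>\<rho>. 0 \<le> q \<rho>"
    and "\<And>\<rho>. \<rho> \<notin> half_disk NA lam \<Longrightarrow> q \<rho> = 0"
  shows "edge_spectrum A NA lam q fx \<le> 0"
proof -
  define T where "T = (\<integral>\<rho>. q \<rho> * pupil NA lam \<rho> *
     (pupil NA lam (\<rho> + (fx, 0)) - pupil NA lam (\<rho> - (fx, 0))) \<partial>lborel)"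
  have integrand: "q \<rho> * pupil NA lam \<rho> *
      (pupil NA lam (\<rho> + (fx, 0)) - pupil NA lam (\<rho> - (fx, 0))) * fx \<le> 0" for \<rho>
  proof (cases "\<rho> \<in> half_disk NA lam")
    case True
    have "0 \<le> q \<rho> * pupil NA lam \<rho>"
      using assms(2) by (simp add: pupil_def)
    from mult_nonneg_nonpos[OF this
        pupil_shift_diff_mult_nonpos[OF half_disk_fst_nonneg[OF True], where t = fx]]
    show ?thesis by (simp add: mult.assoc)
  qed (simp add: assms(3))
  have "T * fx \<le> 0"
  proof -
    have "0 \<le> (\<integral>\<rho>. - (q \<rho> * pupil NA lam \<rho> *
        (pupil NA lam (\<rho> + (fx, 0)) - pupil NA lam (\<rho> - (fx, 0))) * fx) \<partial>lborel)"
      using integrand by (intro integral_nonneg_AE) (simp add: neg_0_le_iff_le)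
    then show ?thesis unfolding T_def by simp
  qed
  then have "T / fx \<le> 0"
    by (simp add: divide_le_0_iff mult_le_0_iff)
  from mult_nonneg_nonpos[OF assms(1) this] show ?thesis
    unfolding edge_spectrum_def T_def[symmetric] by simp
qed

lemma edge_response_eq_integral_spectrum:
  "edge_response A NA lam q x y =
     (\<integral>fx. of_real (edge_spectrum A NA lam q fx) * exp (\<i> * of_real (2 * pi * fx * x)) \<partial>lborel)"
proof -
  have "ptf A NA lam q (fx, 0) * (1 / (\<i> * of_real fx)) = of_real (edge_spectrum A NA lam q fx)"
    for fx
    by (cases "fx = 0") (simp_all add: ptf_def edge_spectrum_def field_simps)
  then show ?thesis
    unfolding edge_response_def by (simp add: mult_ac)
qed

theorem lemma1:
  fixes lam NA A :: real and q :: "real \<times> real \<Rightarrow> real"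
  assumes "lam > 0" and "NA > 0" and "A > 0"
    and "\<And>\<rho>. q \<rho> \<ge> 0"
    and "\<And>\<rho>. \<rho> \<notin> half_disk NA lam \<Longrightarrow> q \<rho> = 0"
    and "integrable lborel q"
  shows "\<forall>x y. cmod (edge_response A NA lam q x y) \<le> cmod (edge_response A NA lam q 0 y)"
proof (intro allI)
  fix x y :: real
  have "\<forall>fx. edge_spectrum A NA lam q fx \<le> 0"
    using assms(3-5) by (simp add: edge_spectrum_nonpos)
  then have "cmod (edge_response A NA lam q x y)
      \<le> cmod (\<integral>fx. of_real (edge_spectrum A NA lam q fx) \<partial>lborel)"
    unfolding edge_response_eq_integral_spectrum
    by (intro norm_integral_unimodular_le) simp_all
  also have "\<dots> = cmod (edge_response A NA lam q 0 y)"
    by (simp add: edge_response_eq_integral_spectrum)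
  finally show "cmod (edge_response A NA lam q x y) \<le> cmod (edge_response A NA lam q 0 y)" .
qed

end
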